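(* (1) If $q$ is even, then $\mathcal S_1$ consists of Type II points, the pencil $T\mathcal S_1$ consists of Type II lines, and $\mathcal S_1=\mathrm{Pr}(\mathcal P_{2,q})=\mathrm{Sp}(\mathcal P_{2,q})$. (2) If $q$ is odd, then: (a) $\mathcal S_1$ consists of Type III points, $T\mathcal S_1$ consists of Type II lines, and $\mathcal S_1=\mu_{\mathrm{line}}(\Pi_{-1})=\mathrm{Pr}(\mathcal P_{2,q})=\mathrm{Pr}(\Pi_{-1})$; (b) $\mathcal S_{-1}$ consists of Type II points, $T\mathcal S_{-1}$ consists of Type III lines, and $\mathcal S_{-1}=\mathrm{Sp}(\mu_{\mathrm{pt}}(\Pi_{-1}))=\mathrm{Sp}(\mathcal P_{2,q})=\mathrm{Sp}(\Pi_{-1})$.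
   Context: Let $q$ be a prime power, $\mathbb{F}_{q^3}^*=\mathbb{F}_{q^3}\setminus\{0\}$. Points of $\mathrm{PG}(2,q^3)$ have homogeneous coordinates $(x,y,z)$ and lines $[a,b,c]$. Let $\phi$ be the collineation $(x,y,z)\mapsto(z^q,x^q,y^q)$ (on lines $[d,e,f]\mapsto[f^q,d^q,e^q]$), whose fixed points form the subplane $\mathcal P_{2,q}=\{(x,x^q,x^{q^2}):x\in\mathbb{F}_{q^3}^*\}$. A point has Type I, II, III according as its $\phi$-orbit is one point, three collinear points, three non-collinear points; a line has Type I, II, III according as its $\phi$-orbit is one line, three concurrent lines, three non-concurrent lines. $\mu_{\mathrm{pt}}$ sends a Type III point $P$ to the line $P^\phi P^{\phi^2}$, $\mu_{\mathrm{line}}$ sends a Type III line $\ell$ to the point $\ell^\phi\cap\ell^{\phi^2}$; for a subplane $\mathcal B$ these are applied elementwise to its points, respectively its lines (lines meeting $\mathcal B$ in $q+1$ points). Let $T=(0,0,1)$ and $m_T$ the line $[0,0,1]$. For $\theta\in\mathbb{F}_{q^3}^*$, $\mathcal S_\theta=\{(x\theta,x^q,0):x\in\mathbb{F}_{q^3}^*\}$, $T\mathcal S_\theta=\{TX:X\in\mathcal S_\theta\}$, and $\Pi_\theta=\{(r\theta^{q+1},r^q,r^{q^2}\theta):r\in\mathbb{F}_{q^3}^*\}$ (a subplane of order $q$). For a subplane $\mathcal B$, $\mathrm{Pr}(\mathcal B)=\{TP\cap m_T:P\in\mathcal B\}$ and $\mathrm{Sp}(\mathcal B)=\{\ell\cap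 m_T:\ell\text{ a line of }\mathcal B\}$; for a set $\mathcal L$ of lines not equal to $m_T$, $\mathrm{Sp}(\mathcal L)=\{\ell\cap m_T:\ell\in\mathcal L\}$. *)

theory Defs
  imports Main "HOL-Computational_Algebra.Primes"
begin

text \<open>Projective plane PG(2,F) over a field F. A point (and likewise a line) is
represented by the set of all nonzero scalar multiples of a nonzero coordinate triple.\<close>

type_synonym 'a vec3 = "'a \<times> 'a \<times> 'a"

definition smul3 :: "'a::field \<Rightarrow> 'a vec3 \<Rightarrow> 'a vec3" where
  "smul3 c v = (case v of (x,y,z) \<Rightarrow> (c*x, c*y, c*z))"

definition proj :: "'a::field vec3 \<Rightarrow> 'a vec3 set" where
  "proj v = (\<lambda>c. smul3 c v) ` {c. c \<noteq> 0}"

definition is_pt :: "'a::field vec3 set \<Rightarrow> bool" where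
  "is_pt P \<longleftrightarrow> (\<exists>v. v \<noteq> (0,0,0) \<and> P = proj v)"

definition is_ln :: "'a::field vec3 set \<Rightarrow> bool" where
  "is_ln l \<longleftrightarrow> (\<exists>v. v \<noteq> (0,0,0) \<and> l = proj v)"

definition inc :: "'a::field vec3 set \<Rightarrow> 'a vec3 set \<Rightarrow> bool" where
  "inc P l \<longleftrightarrow> (\<forall>(x,y,z)\<in>P. \<forall>(a,b,c)\<in>l. a*x + b*y + c*z = 0)"

definition join :: "'a::field vec3 set \<Rightarrow> 'a vec3 set \<Rightarrow> 'a vec3 set" where
  "join P Q = (THE l. is_ln l \<and> inc P l \<and> inc Q l)"

definition meet :: "'a::field vec3 set \<Rightarrow> 'a vec3 set \<Rightarrow> 'a vec3 set" where
  "meet l m = (THE P. is_pt P \<and> inc P l \<and> inc P m)"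

definition frob3 :: "nat \<Rightarrow> 'a::field vec3 \<Rightarrow> 'a vec3" where
  "frob3 q v = (case v of (x,y,z) \<Rightarrow> (z^q, x^q, y^q))"

definition phi :: "nat \<Rightarrow> 'a::field vec3 set \<Rightarrow> 'a vec3 set" where
  "phi q P = frob3 q ` P"

definition orbit :: "nat \<Rightarrow> 'a::field vec3 set \<Rightarrow> 'a vec3 set set" where
  "orbit q P = {P, phi q P, phi q (phi q P)}"

definition collinear3 :: "'a::field vec3 set \<Rightarrow> 'a vec3 set \<Rightarrow> 'a vec3 set \<Rightarrow> bool" where
  "collinear3 A B C \<longleftrightarrow> (\<exists>l. is_ln l \<and> inc A l \<and> inc B l \<and> inc C l)"

definition concurrent3 :: "'a::field vec3 set \<Rightarrow> 'a vec3 set \<Rightarrow> 'a vec3 set \<Rightarrow> bool" where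
  "concurrent3 l m n \<longleftrightarrow> (\<exists>P. is_pt P \<and> inc P l \<and> inc P m \<and> inc P n)"

definition typeII_pt :: "nat \<Rightarrow> 'a::field vec3 set \<Rightarrow> bool" where
  "typeII_pt q P \<longleftrightarrow> is_pt P \<and> card (orbit q P) = 3 \<and>
     collinear3 P (phi q P) (phi q (phi q P))"

definition typeIII_pt :: "nat \<Rightarrow> 'a::field vec3 set \<Rightarrow> bool" where
  "typeIII_pt q P \<longleftrightarrow> is_pt P \<and> card (orbit q P) = 3 \<and>
     \<not> collinear3 P (phi q P) (phi q (phi q P))"

definition typeII_ln :: "nat \<Rightarrow> 'a::field vec3 set \<Rightarrow> bool" where
  "typeII_ln q l \<longleftrightarrow> is_ln l \<and> card (orbit q l) = 3 \<and>
     concurrent3 l (phi q l) (phi q (phi q l))"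

definition typeIII_ln :: "nat \<Rightarrow> 'a::field vec3 set \<Rightarrow> bool" where
  "typeIII_ln q l \<longleftrightarrow> is_ln l \<and> card (orbit q l) = 3 \<and>
     \<not> concurrent3 l (phi q l) (phi q (phi q l))"

definition mu_pt :: "nat \<Rightarrow> 'a::field vec3 set \<Rightarrow> 'a vec3 set" where
  "mu_pt q P = join (phi q P) (phi q (phi q P))"

definition mu_line :: "nat \<Rightarrow> 'a::field vec3 set \<Rightarrow> 'a vec3 set" where
  "mu_line q l = meet (phi q l) (phi q (phi q l))"

definition sub_lines :: "nat \<Rightarrow> 'a::field vec3 set set \<Rightarrow> 'a vec3 set set" where
  "sub_lines q B = {l. is_ln l \<and> card {P\<in>B. inc P l} = q + 1}"

definition Tpt :: "'a::field vec3 set" where "Tpt = proj (0,0,1)"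
definition mT :: "'a::field vec3 set" where "mT = proj (0,0,1)"

definition Pr :: "'a::field vec3 set set \<Rightarrow> 'a vec3 set set" where
  "Pr B = {meet (join Tpt P) mT | P. P \<in> B}"

definition SpL :: "'a::field vec3 set set \<Rightarrow> 'a vec3 set set" where
  "SpL L = {meet l mT | l. l \<in> L}"

definition Sp :: "nat \<Rightarrow> 'a::field vec3 set set \<Rightarrow> 'a vec3 set set" where
  "Sp q B = SpL (sub_lines q B)"

definition S_theta :: "nat \<Rightarrow> 'a::field \<Rightarrow> 'a vec3 set set" where
  "S_theta q \<theta> = {proj (x*\<theta>, x^q, 0) | x. x \<noteq> 0}"

definition TS_theta :: "nat \<Rightarrow> 'a::field \<Rightarrow> 'a vec3 set set" where
  "TS_theta q \<theta> = {join Tpt X | X. X \<in> S_theta q \<theta>}"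

definition P2q :: "nat \<Rightarrow> 'a::field vec3 set set" where
  "P2q q = {proj (x, x^q, x^(q^2)) | x. x \<noteq> 0}"

definition Pi_theta :: "nat \<Rightarrow> 'a::field \<Rightarrow> 'a vec3 set set" where
  "Pi_theta q \<theta> = {proj (r*\<theta>^(q+1), r^q, r^(q^2)*\<theta>) | r. r \<noteq> 0}"

end

theory Submission
  imports Defs "HOL-Number_Theory.Residues" "HOL-Computational_Algebra.Polynomial"
begin

text \<open>
  For s^2 = 1 let B_s be the set of points (x, x^q, s x^(q^2)), x nonzero; then
  P_{2,q} = B_1 and Pi_{-1} = B_{-1}. The dot product of the coordinate vectors of x and a in B_s
  is Tr(ax), the trace to F_q. Hence B_s is self-dual: the line with the coordinates of a
  contains exactly the points x with Tr(ax) = 0, and these are q + 1 points, so the lines of B_s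
  are its own coordinate vectors read as lines. The rest is cross-product computation: projecting
  B_s from T gives the points (x, x^q, 0); the line a meets m_T in (a^q, -a, 0) = (-y, y^q, 0)
  with y = 1/a; and mu sends the element a of B_{-1}, as a point or as a line, to the coordinates
  (a^q, a, 0). The orbit of P = (x theta, x^q, 0) has determinant N(x)(N(theta) + 1) and that of
  the line TP has determinant N(x)(N(theta) - 1), N being the norm to F_q. Finally N(1) = 1,
  N(-1) = -1, and 1 = -1 exactly when q is even.\<close>

section \<open>Homogeneous coordinates\<close>

definition dot3 :: "'a::field vec3 \<Rightarrow> 'a vec3 \<Rightarrow> 'a" where
  "dot3 u v = (case u of (a,b,c) \<Rightarrow> case v of (x,y,z) \<Rightarrow> a*x + b*y + c*z)"

definition cross3 :: "'a::field vec3 \<Rightarrow> 'a vec3 \<Rightarrow> 'a vec3" where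
  "cross3 u v = (case u of (u1,u2,u3) \<Rightarrow> case v of (v1,v2,v3) \<Rightarrow>
     (u2*v3 - u3*v2, u3*v1 - u1*v3, u1*v2 - u2*v1))"

definition det3 :: "'a::field vec3 \<Rightarrow> 'a vec3 \<Rightarrow> 'a vec3 \<Rightarrow> 'a" where
  "det3 u v w = dot3 w (cross3 u v)"

lemma dot3_commute: "dot3 u v = dot3 v u"
  by (cases u, cases v) (simp add: dot3_def algebra_simps)

lemma inc_iff_dot3: "inc P l \<longleftrightarrow> (\<forall>v\<in>P. \<forall>w\<in>l. dot3 v w = 0)"
  by (simp add: inc_def dot3_def split_beta mult.commute)

lemma inc_commute: "inc P l = inc l P"
  unfolding inc_iff_dot3 by (auto simp: dot3_commute)

lemma is_ln_eq_is_pt: "is_ln = is_pt"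
  unfolding is_ln_def[abs_def] is_pt_def[abs_def] ..

lemma join_eq_meet: "Defs.join = Defs.meet"
  unfolding Defs.join_def[abs_def] Defs.meet_def[abs_def] is_ln_eq_is_pt by (simp add: inc_commute)

lemma concurrent3_eq_collinear3: "concurrent3 = collinear3"
  unfolding concurrent3_def[abs_def] collinear3_def[abs_def] is_ln_eq_is_pt
  by (simp add: inc_commute)

lemma typeII_ln_eq_typeII_pt: "typeII_ln = typeII_pt"
  unfolding typeII_ln_def[abs_def] typeII_pt_def[abs_def] is_ln_eq_is_pt
    concurrent3_eq_collinear3 ..

lemma typeIII_ln_eq_typeIII_pt: "typeIII_ln = typeIII_pt"
  unfolding typeIII_ln_def[abs_def] typeIII_pt_def[abs_def] is_ln_eq_is_pt
    concurrent3_eq_collinear3 ..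

lemma mu_line_eq_mu_pt: "mu_line = mu_pt"
  unfolding mu_line_def[abs_def] mu_pt_def[abs_def] join_eq_meet ..

lemma smul3_simp [simp]: "smul3 c (x,y,z) = (c*x, c*y, c*z)"
  by (simp add: smul3_def)

lemma mem_proj_iff: "w \<in> proj v \<longleftrightarrow> (\<exists>c. c \<noteq> 0 \<and> w = smul3 c v)"
  unfolding proj_def by auto

lemma mem_proj_self: "v \<in> proj v"
  unfolding mem_proj_iff by (rule exI[of _ 1]) (cases v, auto)

lemma proj_smul3:
  assumes c: "c \<noteq> 0"
  shows "proj (smul3 c v) = proj v"
proof -
  have "smul3 d (smul3 c v) = smul3 (d * c) v" for d by (cases v) (simp add: mult.assoc)
  then have "proj (smul3 c v) = (\<lambda>d. smul3 d v) ` (\<lambda>d. d * c) ` {d. d \<noteq> 0}"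
    unfolding proj_def image_image by simp
  also have "(\<lambda>d. d * c) ` {d. d \<noteq> 0} = {d. d \<noteq> 0}"
    using c by (force simp: image_iff intro: exI[of _ "_ / c"])
  finally show ?thesis unfolding proj_def .
qed

lemma proj_eq_iff: "proj u = proj v \<longleftrightarrow> (\<exists>c. c \<noteq> 0 \<and> v = smul3 c u)"
  by (metis mem_proj_iff mem_proj_self proj_smul3)

lemma proj_eqI: "c \<noteq> 0 \<Longrightarrow> v = smul3 c u \<Longrightarrow> proj u = proj v"
  using proj_eq_iff by blast

lemma is_pt_proj: "v \<noteq> (0,0,0) \<Longrightarrow> is_pt (proj v)"
  unfolding is_pt_def by blast

lemma dot3_smul3_left: "dot3 (smul3 c u) v = c * dot3 u v"
  by (cases u, cases v) (simp add: dot3_def algebra_simps)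

lemma dot3_smul3_right: "dot3 u (smul3 c v) = c * dot3 u v"
  by (cases u, cases v) (simp add: dot3_def algebra_simps)

lemma inc_proj_iff: "inc (proj u) (proj v) \<longleftrightarrow> dot3 u v = 0"
proof
  assume "inc (proj u) (proj v)"
  then show "dot3 u v = 0"
    using mem_proj_self[of u] mem_proj_self[of v] unfolding inc_iff_dot3 by blast
next
  assume "dot3 u v = 0"
  then show "inc (proj u) (proj v)"
    unfolding inc_iff_dot3 by (auto simp: mem_proj_iff dot3_smul3_left dot3_smul3_right)
qed

lemma cross3_eq_0_imp_smul3:
  assumes "u \<noteq> (0,0,0)" "cross3 u v = (0,0,0)"
  shows "\<exists>c. v = smul3 c u"
proof -
  obtain u1 u2 u3 v1 v2 v3 where uv: "u = (u1,u2,u3)" "v = (v1,v2,v3)"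
    by (cases u, cases v)
  have e: "u2*v3 = u3*v2" "u3*v1 = u1*v3" "u1*v2 = u2*v1"
    using assms(2) unfolding uv cross3_def by auto
  consider "u1 \<noteq> 0" | "u1 = 0" "u2 \<noteq> 0" | "u1 = 0" "u2 = 0" "u3 \<noteq> 0"
    using assms(1) uv by auto
  then show ?thesis
  proof cases
    case 1
    then show ?thesis using e unfolding uv by (intro exI[of _ "v1/u1"]) (auto simp: field_simps)
  next
    case 2
    then show ?thesis using e unfolding uv by (intro exI[of _ "v2/u2"]) (auto simp: field_simps)
  next
    case 3
    then show ?thesis using e unfolding uv by (intro exI[of _ "v3/u3"]) (auto simp: field_simps)
  qed
qed

lemma cross3_zero [simp]: "cross3 (0, 0, 0) v = (0, 0, 0)" "cross3 u (0, 0, 0) = (0, 0, 0)"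
  by (simp_all add: cross3_def split_beta)

lemma proj_eq_iff_cross3:
  assumes "u \<noteq> (0,0,0)" "v \<noteq> (0,0,0)"
  shows "proj u = proj v \<longleftrightarrow> cross3 u v = (0,0,0)"
proof
  assume "proj u = proj v"
  then obtain c where "v = smul3 c u" using proj_eq_iff by blast
  then show "cross3 u v = (0,0,0)" by (cases u) (simp add: cross3_def algebra_simps)
next
  assume "cross3 u v = (0,0,0)"
  then obtain c where c: "v = smul3 c u" using cross3_eq_0_imp_smul3 assms(1) by blast
  with assms(2) have "c \<noteq> 0" by (cases u) auto
  with c show "proj u = proj v" using proj_eqI by blast
qed

lemma dot3_cross3_left: "dot3 u (cross3 u v) = 0"
  by (cases u, cases v) (simp add: dot3_def cross3_def algebra_simps)

lemma dot3_cross3_right: "dot3 v (cross3 u v) = 0"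
  by (cases u, cases v) (simp add: dot3_def cross3_def algebra_simps)

lemma cross3_cross3_eq_0:
  assumes "dot3 w u = 0" "dot3 w v = 0"
  shows "cross3 w (cross3 u v) = (0, 0, 0)"
proof -
  have "cross3 w (cross3 u v) = (dot3 w v * fst u - dot3 w u * fst v,
      dot3 w v * fst (snd u) - dot3 w u * fst (snd v),
      dot3 w v * snd (snd u) - dot3 w u * snd (snd v))"
    by (cases w, cases u, cases v) (simp add: dot3_def cross3_def algebra_simps)
  with assms show ?thesis by simp
qed

lemma meet_proj:
  assumes "cross3 u v \<noteq> (0,0,0)"
  shows "Defs.meet (proj u) (proj v) = proj (cross3 u v)"
  unfolding Defs.meet_def
proof (rule the_equality)
  show "is_pt (proj (cross3 u v)) \<and> inc (proj (cross3 u v)) (proj u) \<and>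
      inc (proj (cross3 u v)) (proj v)"
    using assms
    by (simp add: is_pt_proj inc_proj_iff dot3_commute dot3_cross3_left dot3_cross3_right)
next
  fix Q assume Q: "is_pt Q \<and> inc Q (proj u) \<and> inc Q (proj v)"
  then obtain w where w: "w \<noteq> (0,0,0)" "Q = proj w" unfolding is_pt_def by blast
  with Q have "cross3 w (cross3 u v) = (0,0,0)"
    by (auto simp: inc_proj_iff intro: cross3_cross3_eq_0)
  then show "Q = proj (cross3 u v)" using w assms proj_eq_iff_cross3 by blast
qed

lemma join_proj: "cross3 u v \<noteq> (0,0,0) \<Longrightarrow> Defs.join (proj u) (proj v) = proj (cross3 u v)"
  by (simp add: join_eq_meet meet_proj)

lemma collinear3_proj_iff:
  assumes "cross3 u v \<noteq> (0,0,0)"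
  shows "collinear3 (proj u) (proj v) (proj w) \<longleftrightarrow> det3 u v w = 0"
proof
  assume "collinear3 (proj u) (proj v) (proj w)"
  then obtain n where "n \<noteq> (0,0,0)" "inc (proj u) (proj n)" "inc (proj v) (proj n)"
    "inc (proj w) (proj n)"
    unfolding collinear3_def is_ln_def by blast
  then have n: "n \<noteq> (0,0,0)" "dot3 n u = 0" "dot3 n v = 0" "dot3 n w = 0"
    by (simp_all add: inc_proj_iff dot3_commute)
  then obtain c where "cross3 u v = smul3 c n"
    using cross3_eq_0_imp_smul3 cross3_cross3_eq_0 by blast
  with n(4) show "det3 u v w = 0"
    by (simp add: det3_def dot3_smul3_right dot3_commute)
next
  assume "det3 u v w = 0"
  with assms show "collinear3 (proj u) (proj v) (proj w)"
    unfolding collinear3_def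
    by (intro exI[of _ "proj (cross3 u v)"])
      (simp add: is_ln_eq_is_pt is_pt_proj inc_proj_iff dot3_commute dot3_cross3_left
        dot3_cross3_right det3_def)
qed

lemma join_Tpt_proj:
  assumes "(a, b) \<noteq> (0, 0)"
  shows "Defs.join Tpt (proj (a, b, c)) = proj (-b, a, 0)"
proof -
  have cross: "cross3 (0, 0, 1) (a, b, c) = (-b, a, 0)" by (simp add: cross3_def)
  with assms have "cross3 (0, 0, 1) (a, b, c) \<noteq> (0, 0, 0)" by auto
  then show ?thesis unfolding Tpt_def cross[symmetric] by (rule join_proj)
qed

lemma meet_mT_proj:
  assumes "(a, b) \<noteq> (0, 0)"
  shows "Defs.meet (proj (a, b, c)) mT = proj (b, -a, 0)"
proof -
  have cross: "cross3 (a, b, c) (0, 0, 1) = (b, -a, 0)" by (simp add: cross3_def)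
  with assms have "cross3 (a, b, c) (0, 0, 1) \<noteq> (0, 0, 0)" by auto
  then show ?thesis unfolding mT_def cross[symmetric] by (rule meet_proj)
qed

section \<open>Finite fields\<close>

lemma card_eq_card_image_mult:
  assumes "finite A" "\<And>y. y \<in> f ` A \<Longrightarrow> card {x\<in>A. f x = y} = m"
  shows "card A = card (f ` A) * m"
proof -
  have "card A = card (\<Union>y\<in>f ` A. {x\<in>A. f x = y})"
    by (rule arg_cong[where f = card]) auto
  also have "\<dots> = (\<Sum>y\<in>f ` A. card {x\<in>A. f x = y})"
    by (rule card_UN_disjoint) (use assms(1) in auto)
  finally show ?thesis using assms(2) by simp
qed

lemma prime_CHAR_finite_field: "prime CHAR('a::{field,finite})"
  using prime_CHAR_semidom finite_imp_CHAR_pos[where ?'a = 'a] by simp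

lemma power_card_UNIV_eq_self:
  fixes x :: "'a::{field,finite}"
  shows "x ^ card (UNIV :: 'a set) = x"
proof -
  obtain n where n: "card (UNIV :: 'a set) = Suc n"
    using finite_UNIV_card_ge_0[where ?'a = 'a] gr0_conv_Suc by auto
  define G :: "'a monoid" where "G = \<lparr>carrier = UNIV - {0 :: 'a}, monoid.mult = (*), one = 1\<rparr>"
  have "group G"
    unfolding G_def by (rule groupI) (auto simp: mult.assoc intro!: bexI[of _ "inverse x" for x])
  then interpret G: group G .
  have pow: "y [^]\<^bsub>G\<^esub> k = y ^ k" for y :: 'a and k :: nat
    by (induction k) (simp_all add: G_def)
  have "Coset.order G = n"
    using n by (simp add: Coset.order_def G_def card_Diff_singleton)
  then have "x ^ n = 1" if "x \<noteq> 0"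
    using G.pow_order_eq_1[of x] that by (simp add: pow) (simp add: G_def)
  then show ?thesis by (cases "x = 0") (simp_all add: n)
qed

context
  fixes q :: nat
  assumes prime_power: "\<exists>p k. prime p \<and> 0 < k \<and> q = p ^ k"
    and card_field: "card (UNIV :: 'a::{field,finite} set) = q ^ 3"
begin

lemma q_eq_CHAR_power: "\<exists>k > 0. q = CHAR('a) ^ k"
proof -
  obtain p k where pk: "prime p" "0 < k" "q = p ^ k" using prime_power by blast
  have "CHAR('a) dvd p ^ (k * 3)"
    using CHAR_dvd_CARD[where ?'a = 'a] card_field pk(3) by (simp add: power_mult)
  then have "CHAR('a) = p"
    using pk(1) prime_CHAR_finite_field prime_dvd_power primes_dvd_imp_eq by blast
  with pk show ?thesis by blast
qed

lemma q_ge_2: "q \<ge> 2"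
proof -
  obtain p k where "prime p" "0 < k" "q = p ^ k" using prime_power by blast
  then show ?thesis
    using prime_ge_2_nat[of p] power_increasing[of 1 k p] by simp
qed

lemma zero_power_q [simp]: "(0 :: 'a) ^ q = 0" "(0 :: 'a) ^ q\<^sup>2 = 0"
  using q_ge_2 by simp_all

lemma frobenius_add: "((x :: 'a) + y) ^ q = x ^ q + y ^ q"
  using q_eq_CHAR_power freshmans_dream'[OF prime_CHAR_finite_field] by blast

lemma power_q_cube: "(x :: 'a) ^ q ^ 3 = x"
  using power_card_UNIV_eq_self[of x] card_field by simp

lemma frobenius_minus: "(- (x :: 'a)) ^ q = - (x ^ q)"
  using frobenius_add[of "-x" x] by (simp add: eq_neg_iff_add_eq_0)

lemma frobenius_diff: "((x :: 'a) - y) ^ q = x ^ q - y ^ q"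
  using frobenius_add[of x "-y"] frobenius_minus[of y] by simp

lemma power_q_q: "((x :: 'a) ^ q) ^ q = x ^ q\<^sup>2"
  by (simp add: power_mult[symmetric] power2_eq_square)

lemma power_q2_q: "((x :: 'a) ^ q\<^sup>2) ^ q = x"
  using power_q_cube[of x] by (simp add: power_mult[symmetric] power3_eq_cube power2_eq_square)

lemma power_q_q2: "((x :: 'a) ^ q) ^ q\<^sup>2 = x"
  using power_q_cube[of x]
  by (simp add: power_mult[symmetric] power3_eq_cube power2_eq_square mult.commute)

lemma power_q2_q2: "((x :: 'a) ^ q\<^sup>2) ^ q\<^sup>2 = x ^ q"
  by (metis power_q2_q power_q_q power_q_q2)

lemma frobenius2_add: "((x :: 'a) + y) ^ q\<^sup>2 = x ^ q\<^sup>2 + y ^ q\<^sup>2"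
  by (simp add: power_q_q[symmetric] frobenius_add)

lemma frobenius2_minus: "(- (x :: 'a)) ^ q\<^sup>2 = - (x ^ q\<^sup>2)"
  by (simp add: power_q_q[symmetric] frobenius_minus)

lemma frobenius2_diff: "((x :: 'a) - y) ^ q\<^sup>2 = x ^ q\<^sup>2 - y ^ q\<^sup>2"
  by (simp add: power_q_q[symmetric] frobenius_diff)

lemmas frobenius_simps = frobenius_add frobenius_minus frobenius_diff frobenius2_add
  frobenius2_minus frobenius2_diff power_q_q power_q2_q power_q_q2 power_q2_q2 power_mult_distrib

lemma two_eq_zero_iff_even: "(2 :: 'a) = 0 \<longleftrightarrow> even q"
proof -
  obtain k where k: "k > 0" "q = CHAR('a) ^ k" using q_eq_CHAR_power by blast
  note p = prime_CHAR_finite_field[where ?'a = 'a]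
  have "(2 :: 'a) = 0 \<longleftrightarrow> CHAR('a) dvd 2"
    using of_nat_eq_0_iff_char_dvd[of 2, where ?'a = 'a] by simp
  also have "\<dots> \<longleftrightarrow> CHAR('a) = 2"
    using primes_dvd_imp_eq[OF p two_is_prime_nat] by auto
  also have "\<dots> \<longleftrightarrow> even q"
    using k p prime_dvd_power[OF two_is_prime_nat, of "CHAR('a)" k]
      primes_dvd_imp_eq[OF two_is_prime_nat p] by auto
  finally show ?thesis .
qed

lemma minus_one_eq_one_iff_even: "(-1 :: 'a) = 1 \<longleftrightarrow> even q"
proof -
  have "(-1 :: 'a) = 1 \<longleftrightarrow> 1 + 1 = (0 :: 'a)"
    by (subst eq_commute) (rule eq_neg_iff_add_eq_0)
  then show ?thesis
    unfolding one_add_one two_eq_zero_iff_even .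
qed

definition trace :: "'a \<Rightarrow> 'a" where
  "trace z = z + z ^ q + z ^ q\<^sup>2"

lemma trace_add: "trace (x + y) = trace x + trace y"
  unfolding trace_def by (simp add: frobenius_add frobenius2_add algebra_simps)

lemma trace_zero [simp]: "trace 0 = 0"
  by (simp add: trace_def)

lemma trace_power_q: "trace z ^ q = trace z"
  unfolding trace_def by (simp add: frobenius_add power_q_q power_q2_q algebra_simps)

lemma trace_scale: "c ^ q = c \<Longrightarrow> trace (c * z) = c * trace z"
  unfolding trace_def by (simp add: power_mult_distrib power_q_q[symmetric] algebra_simps)

lemma card_frobenius_fixed_le: "card {c :: 'a. c ^ q = c} \<le> q"
proof -
  define P :: "'a poly" where "P = monom 1 q - [:0, 1:]"
  have "coeff P q = 1" using q_ge_2 by (simp add: P_def coeff_pCons split: nat.split)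
  then have "P \<noteq> 0" by auto
  moreover have "degree P \<le> q"
    unfolding P_def using q_ge_2 by (intro degree_diff_le) (auto simp: degree_monom_eq)
  moreover have "{c :: 'a. c ^ q = c} = {x. poly P x = 0}" by (auto simp: P_def poly_monom)
  ultimately show ?thesis using card_poly_roots_bound[of P] by simp
qed

lemma card_trace_kernel_le: "card {z :: 'a. trace z = 0} \<le> q\<^sup>2"
proof -
  define P :: "'a poly" where "P = monom 1 (q\<^sup>2) + monom 1 q + [:0, 1:]"
  have q: "1 < q" "q < q\<^sup>2" using q_ge_2 by (simp_all add: power2_eq_square)
  then have "coeff P (q\<^sup>2) = 1" by (simp add: P_def coeff_pCons split: nat.split)
  then have "P \<noteq> 0" by auto
  moreover have "degree P \<le> q\<^sup>2"
    unfolding P_def using q by (intro degree_add_le) (auto simp: degree_monom_eq)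
  moreover have "{z :: 'a. trace z = 0} = {x. poly P x = 0}"
    by (auto simp: P_def poly_monom trace_def algebra_simps)
  ultimately show ?thesis using card_poly_roots_bound[of P] by simp
qed

text \<open>The trace maps the field into the fixed field of the Frobenius map, and its fibres are
  cosets of its kernel; with the two upper bounds above this forces both to be equalities.\<close>

lemma card_field_le_fixed_times_kernel:
  "q ^ 3 \<le> card {c :: 'a. c ^ q = c} * card {z :: 'a. trace z = 0}"
proof -
  let ?K0 = "{z :: 'a. trace z = 0}"
  have "card {x. trace x = trace z} = card ?K0" for z
  proof -
    have "{x. trace x = trace z} = (\<lambda>k. z + k) ` ?K0"
    proof (intro Set.set_eqI iffI)
      fix x assume "x \<in> {x. trace x = trace z}"
      then have "trace (x - z) = 0" using trace_add[of "x - z" z] by simp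
      then show "x \<in> (\<lambda>k. z + k) ` ?K0" by (intro image_eqI[of _ _ "x - z"]) auto
    qed (auto simp: trace_add)
    then show ?thesis by (simp add: card_image)
  qed
  then have "card (UNIV :: 'a set) = card (range trace) * card ?K0"
    by (intro card_eq_card_image_mult) auto
  moreover have "card (range trace) \<le> card {c :: 'a. c ^ q = c}"
    by (rule card_mono) (auto simp: trace_power_q)
  ultimately show ?thesis using card_field by (metis mult_le_mono1)
qed

lemma card_frobenius_fixed: "card {c :: 'a. c ^ q = c} = q"
  and card_trace_kernel: "card {z :: 'a. trace z = 0} = q\<^sup>2"
proof -
  have le: "q * q\<^sup>2 \<le> card {c :: 'a. c ^ q = c} * card {z :: 'a. trace z = 0}"
    using card_field_le_fixed_times_kernel by (simp add: power3_eq_cube power2_eq_square)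
  have "q * q\<^sup>2 \<le> q * card {z :: 'a. trace z = 0}"
    using le card_frobenius_fixed_le by (meson le_trans mult_le_mono1)
  then show "card {z :: 'a. trace z = 0} = q\<^sup>2"
    using card_trace_kernel_le q_ge_2 by simp
  moreover have "q * q\<^sup>2 \<le> card {c :: 'a. c ^ q = c} * q\<^sup>2"
    using le card_trace_kernel_le by (meson le_trans mult_le_mono2)
  ultimately show "card {c :: 'a. c ^ q = c} = q"
    using card_frobenius_fixed_le q_ge_2 by simp
qed

section \<open>The subplanes B_s\<close>

definition subplane_vec :: "'a \<Rightarrow> 'a \<Rightarrow> 'a vec3" where
  "subplane_vec s x = (x, x ^ q, s * x ^ q\<^sup>2)"

definition subplane :: "'a \<Rightarrow> 'a vec3 set set" where
  "subplane s = {proj (subplane_vec s x) | x. x \<noteq> 0}"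

lemma subplane_eq_image: "subplane s = (\<lambda>x. proj (subplane_vec s x)) ` {x. x \<noteq> 0}"
  unfolding subplane_def by blast

lemma subplane_vec_0 [simp]: "subplane_vec s 0 = (0, 0, 0)"
  by (simp add: subplane_vec_def)

lemma subplane_vec_eq_0_iff [simp]: "subplane_vec s x = (0, 0, 0) \<longleftrightarrow> x = 0"
  using q_ge_2 by (auto simp: subplane_vec_def)

lemma P2q_eq_subplane: "P2q q = subplane 1"
  by (simp add: P2q_def subplane_def subplane_vec_def)

lemma Pi_theta_minus_one_eq_subplane: "Pi_theta q (-1) = subplane (-1)"
proof -
  have "(-1 :: 'a) ^ (q + 1) = 1"
    using minus_one_eq_one_iff_even by (cases "even q") simp_all
  then show ?thesis by (simp add: Pi_theta_def subplane_def subplane_vec_def)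
qed

lemma dot3_subplane_vec: "s * s = 1 \<Longrightarrow> dot3 (subplane_vec s x) (subplane_vec s a) = trace (a * x)"
  by (simp add: subplane_vec_def dot3_def trace_def power_mult_distrib algebra_simps)

lemma proj_subplane_vec_eq_iff:
  assumes "x \<noteq> 0"
  shows "proj (subplane_vec s y) = proj (subplane_vec s x) \<longleftrightarrow> (\<exists>c. c \<noteq> 0 \<and> c ^ q = c \<and> y = c * x)"
proof
  assume "proj (subplane_vec s y) = proj (subplane_vec s x)"
  then obtain c where c: "c \<noteq> 0" "subplane_vec s y = smul3 c (subplane_vec s x)"
    using proj_eq_iff by metis
  then have "y = c * x" "c ^ q * x ^ q = c * x ^ q"
    by (auto simp: subplane_vec_def power_mult_distrib)
  with c(1) assms show "\<exists>c. c \<noteq> 0 \<and> c ^ q = c \<and> y = c * x" by auto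
next
  assume "\<exists>c. c \<noteq> 0 \<and> c ^ q = c \<and> y = c * x"
  then obtain c where c: "c \<noteq> 0" "c ^ q = c" "y = c * x" by blast
  then have "c ^ q\<^sup>2 = c" using power_q_q[of c] by simp
  with c have "subplane_vec s y = smul3 c (subplane_vec s x)"
    by (simp add: subplane_vec_def power_mult_distrib algebra_simps)
  with c(1) show "proj (subplane_vec s y) = proj (subplane_vec s x)"
    using proj_eqI by metis
qed

lemma cross3_subplane_vec:
  "s * s = 1 \<Longrightarrow> cross3 (subplane_vec s x) (subplane_vec s y) =
     smul3 s (subplane_vec s (x ^ q * y ^ q\<^sup>2 - x ^ q\<^sup>2 * y ^ q))"
  by (simp add: subplane_vec_def cross3_def frobenius_simps algebra_simps)
    (simp add: mult.assoc[symmetric])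

lemma card_trace_orthogonal:
  assumes "a \<noteq> 0"
  shows "card {x :: 'a. x \<noteq> 0 \<and> trace (a * x) = 0} = q\<^sup>2 - 1"
proof -
  have "{x. x \<noteq> 0 \<and> trace (a * x) = 0} = (\<lambda>z. z / a) ` ({z. trace z = 0} - {0})"
    using assms by (auto intro!: image_eqI[of _ _ "a * x" for x])
  also have "card \<dots> = card ({z :: 'a. trace z = 0} - {0})"
    using assms by (intro card_image) (auto simp: inj_on_def)
  finally show ?thesis using card_trace_kernel by simp
qed

text \<open>The points on the line a are the x with Tr(ax) = 0: there are q^2 - 1 such x, and each
  point arises from q - 1 of them.\<close>

lemma card_subplane_points_on_line:
  assumes s: "s * s = 1" and a: "a \<noteq> 0"
  shows "card {P \<in> subplane s. inc P (proj (subplane_vec s a))} = q + 1"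
proof -
  define Z where "Z = {x. x \<noteq> 0 \<and> trace (a * x) = 0}"
  have points:
    "{P \<in> subplane s. inc P (proj (subplane_vec s a))} = (\<lambda>x. proj (subplane_vec s x)) ` Z"
    unfolding subplane_def Z_def by (auto simp: inc_proj_iff dot3_subplane_vec[OF s])
  have "card {y \<in> Z. proj (subplane_vec s y) = proj (subplane_vec s x)} = q - 1" if "x \<in> Z" for x
  proof -
    have "{y \<in> Z. proj (subplane_vec s y) = proj (subplane_vec s x)} =
      (\<lambda>c. c * x) ` ({c. c ^ q = c} - {0})"
      using that by (auto simp: Z_def proj_subplane_vec_eq_iff trace_scale mult.left_commute)
    also have "card \<dots> = card ({c :: 'a. c ^ q = c} - {0})"
      using that by (intro card_image) (auto simp: inj_on_def Z_def)
    finally show ?thesis using card_frobenius_fixed by simp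
  qed
  then have "card Z = card ((\<lambda>x. proj (subplane_vec s x)) ` Z) * (q - 1)"
    by (intro card_eq_card_image_mult) (auto simp: Z_def)
  moreover have "card Z = (q + 1) * (q - 1)"
    using card_trace_orthogonal[OF a] q_ge_2 by (simp add: Z_def power2_eq_square algebra_simps)
  moreover have "q - 1 \<noteq> 0" using q_ge_2 by simp
  ultimately show ?thesis
    unfolding points by (metis mult_right_cancel)
qed

lemma line_through_subplane_points:
  assumes s: "s * s = 1" and l: "is_ln l"
    and PQ: "P \<in> subplane s" "Q \<in> subplane s" "P \<noteq> Q" "inc P l" "inc Q l"
  shows "l \<in> subplane s"
proof -
  obtain x y where xy: "x \<noteq> 0" "P = proj (subplane_vec s x)" "y \<noteq> 0" "Q = proj (subplane_vec s y)"
    using PQ(1,2) unfolding subplane_def by blast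
  obtain w where w: "w \<noteq> (0, 0, 0)" "l = proj w"
    using l unfolding is_ln_def by blast
  have cross: "cross3 (subplane_vec s x) (subplane_vec s y) \<noteq> (0, 0, 0)"
    using proj_eq_iff_cross3[of "subplane_vec s x" "subplane_vec s y"] xy PQ(3) by simp
  have "dot3 w (subplane_vec s x) = 0" "dot3 w (subplane_vec s y) = 0"
    using PQ(4,5) xy w by (simp_all add: inc_proj_iff dot3_commute)
  then have "l = proj (cross3 (subplane_vec s x) (subplane_vec s y))"
    using proj_eq_iff_cross3[OF w(1) cross] w(2) cross3_cross3_eq_0 by simp
  moreover define a where "a = x ^ q * y ^ q\<^sup>2 - x ^ q\<^sup>2 * y ^ q"
  then have a: "cross3 (subplane_vec s x) (subplane_vec s y) = smul3 s (subplane_vec s a)"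
    using cross3_subplane_vec[OF s] by simp
  moreover have "s \<noteq> 0" using s by auto
  ultimately have "l = proj (subplane_vec s a)" using proj_smul3 by simp
  moreover have "a \<noteq> 0"
    using cross unfolding a by auto
  ultimately show "l \<in> subplane s" unfolding subplane_def by blast
qed

lemma sub_lines_subplane:
  assumes s: "s * s = 1"
  shows "sub_lines q (subplane s) = subplane s"
proof (intro Set.set_eqI iffI)
  fix l assume "l \<in> subplane s"
  then obtain a where "a \<noteq> 0" "l = proj (subplane_vec s a)" unfolding subplane_def by blast
  then show "l \<in> sub_lines q (subplane s)"
    using card_subplane_points_on_line[OF s] by (simp add: sub_lines_def is_ln_eq_is_pt is_pt_proj)
next
  fix l assume l: "l \<in> sub_lines q (subplane s)"
  define S where "S = {P \<in> subplane s. inc P l}"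
  have card_S: "card S = q + 1" using l by (simp add: sub_lines_def S_def)
  then obtain P where P: "P \<in> S" by fastforce
  with card_S have "card (S - {P}) = q" by (simp add: card_Diff_singleton_if)
  with q_ge_2 have "S - {P} \<noteq> {}" by (metis card.empty not_numeral_le_zero)
  then obtain Q where "Q \<in> S" "Q \<noteq> P" by blast
  with P l show "l \<in> subplane s"
    using line_through_subplane_points[OF s] by (auto simp: S_def sub_lines_def)
qed

section \<open>Projections, the maps mu, and types of orbits\<close>

lemma S_theta_eq_image: "S_theta q (\<theta> :: 'a) = (\<lambda>x. proj (x * \<theta>, x ^ q, 0)) ` {x. x \<noteq> 0}"
  unfolding S_theta_def by blast

lemma S_theta_eq_image_inverse: "S_theta q (\<theta> :: 'a) = (\<lambda>a. proj (a ^ q * \<theta>, a, 0)) ` {a. a \<noteq> 0}"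
proof -
  have "proj (x * \<theta>, x ^ q, 0) = proj (inverse x ^ q * \<theta>, inverse x, 0)" if "x \<noteq> 0" for x :: 'a
    using that q_ge_2
    by (intro proj_eqI[of "inverse (x * x ^ q)"]) (simp_all add: field_simps power_inverse)
  then have "S_theta q \<theta> = (\<lambda>a. proj (a ^ q * \<theta>, a, 0)) ` inverse ` {x. x \<noteq> 0}"
    unfolding S_theta_eq_image image_image by (intro image_cong) auto
  also have "inverse ` {x :: 'a. x \<noteq> 0} = {x. x \<noteq> 0}"
    by (auto intro: image_eqI[of _ _ "inverse x" for x])
  finally show ?thesis .
qed

lemma Pr_subplane: "Pr (subplane s) = S_theta q (1 :: 'a)"
proof -
  have "Defs.meet (Defs.join Tpt (proj (subplane_vec s x))) mT = proj (x * 1, x ^ q, 0)"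
    if "x \<noteq> 0" for x
    using that q_ge_2 by (simp add: subplane_vec_def join_Tpt_proj meet_mT_proj)
  then show ?thesis
    unfolding Pr_def subplane_eq_image S_theta_eq_image Setcompr_eq_image image_image
    by (intro image_cong) auto
qed

lemma Sp_subplane:
  assumes "s * s = 1"
  shows "Sp q (subplane s) = S_theta q (-1)"
proof -
  have "Defs.meet (proj (subplane_vec s a)) mT = proj (a ^ q * -1, a, 0)" if "a \<noteq> 0" for a
  proof -
    have "proj (a ^ q, - a, 0) = proj (a ^ q * -1, a, 0)" by (intro proj_eqI[of "-1"]) simp_all
    with that show ?thesis by (simp add: subplane_vec_def meet_mT_proj)
  qed
  then show ?thesis
    unfolding Sp_def sub_lines_subplane[OF assms]
    unfolding SpL_def subplane_eq_image S_theta_eq_image_inverse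
      Setcompr_eq_image image_image
    by (intro image_cong) auto
qed

lemma phi_proj: "phi q (proj (v :: 'a vec3)) = proj (frob3 q v)"
proof -
  have frob: "frob3 q (smul3 c v) = smul3 (c ^ q) (frob3 q v)" for c
    by (cases v) (simp add: frob3_def power_mult_distrib)
  have surj: "(\<lambda>c. c ^ q) ` {c :: 'a. c \<noteq> 0} = {c. c \<noteq> 0}"
    using q_ge_2 by (auto simp: power_q2_q intro!: image_eqI[of _ _ "d ^ q\<^sup>2" for d])
  have "proj (frob3 q v) = (\<lambda>c. smul3 c (frob3 q v)) ` (\<lambda>c. c ^ q) ` {c. c \<noteq> 0}"
    unfolding proj_def surj ..
  then show ?thesis
    by (simp add: phi_def proj_def image_image frob)
qed

lemma mu_pt_subplane_minus_one:
  assumes "odd q" "a \<noteq> 0"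
  shows "mu_pt q (proj (subplane_vec (-1) a)) = proj (a ^ q, a, 0)"
proof -
  let ?u = "(-a, a ^ q, a ^ q\<^sup>2)" and ?v = "(a, -(a ^ q), a ^ q\<^sup>2)"
  have "(2 :: 'a) \<noteq> 0" using assms(1) two_eq_zero_iff_even by simp
  with assms(2) have c: "2 * a ^ q\<^sup>2 \<noteq> 0" by simp
  have cross: "cross3 ?u ?v = smul3 (2 * a ^ q\<^sup>2) (a ^ q, a, 0)"
    by (simp add: cross3_def algebra_simps)
  have "mu_pt q (proj (subplane_vec (-1) a)) = Defs.join (proj ?u) (proj ?v)"
    by (simp add: mu_pt_def phi_proj subplane_vec_def frob3_def frobenius_simps)
  also have "\<dots> = proj (smul3 (2 * a ^ q\<^sup>2) (a ^ q, a, 0))"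
    unfolding cross[symmetric] using c assms(2) by (intro join_proj) (simp add: cross)
  also have "\<dots> = proj (a ^ q, a, 0)"
    using c by (rule proj_smul3)
  finally show ?thesis .
qed

lemma mu_line_sub_lines_subplane:
  assumes "odd q"
  shows "mu_line q ` sub_lines q (subplane (-1)) = S_theta q 1"
  unfolding sub_lines_subplane[of "-1", simplified] mu_line_eq_mu_pt
  unfolding subplane_eq_image S_theta_eq_image_inverse image_image
  using mu_pt_subplane_minus_one[OF assms] by (intro image_cong) auto

lemma SpL_mu_pt_subplane:
  assumes "odd q"
  shows "SpL (mu_pt q ` subplane (-1)) = S_theta q (-1)"
proof -
  have "Defs.meet (proj (a ^ q, a, 0)) mT = proj (a * -1, a ^ q, 0)" if "a \<noteq> 0" for a :: 'a
  proof -
    have "proj (a, - (a ^ q), 0) = proj (a * -1, a ^ q, 0)" by (intro proj_eqI[of "-1"]) simp_all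
    with that show ?thesis by (simp add: meet_mT_proj)
  qed
  then show ?thesis
    unfolding SpL_def subplane_eq_image S_theta_eq_image Setcompr_eq_image image_image
    using mu_pt_subplane_minus_one[OF assms] by (intro image_cong) auto
qed

lemma proj_type_iff_det:
  fixes u :: "'a vec3"
  assumes "cross3 u (frob3 q u) \<noteq> (0, 0, 0)"
    and "cross3 (frob3 q u) (frob3 q (frob3 q u)) \<noteq> (0, 0, 0)"
    and "cross3 u (frob3 q (frob3 q u)) \<noteq> (0, 0, 0)"
  shows "typeII_pt q (proj u) \<longleftrightarrow> det3 u (frob3 q u) (frob3 q (frob3 q u)) = 0"
    and "typeIII_pt q (proj u) \<longleftrightarrow> det3 u (frob3 q u) (frob3 q (frob3 q u)) \<noteq> 0"
proof -
  let ?v = "frob3 q u" and ?w = "frob3 q (frob3 q u)"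
  have nonzero: "u \<noteq> (0, 0, 0)" "?v \<noteq> (0, 0, 0)" "?w \<noteq> (0, 0, 0)"
    using assms by auto
  then have "proj u \<noteq> proj ?v" "proj ?v \<noteq> proj ?w" "proj u \<noteq> proj ?w"
    using assms by (simp_all add: proj_eq_iff_cross3)
  then have "card (orbit q (proj u)) = 3"
    by (simp add: orbit_def phi_proj)
  moreover have "collinear3 (proj u) (proj ?v) (proj ?w) \<longleftrightarrow> det3 u ?v ?w = 0"
    using assms(1) by (rule collinear3_proj_iff)
  ultimately show "typeII_pt q (proj u) \<longleftrightarrow> det3 u ?v ?w = 0"
    and "typeIII_pt q (proj u) \<longleftrightarrow> det3 u ?v ?w \<noteq> 0"
    using is_pt_proj[OF nonzero(1)] by (simp_all add: typeII_pt_def typeIII_pt_def phi_proj)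
qed

definition field_norm :: "'a \<Rightarrow> 'a" where
  "field_norm \<theta> = \<theta> * \<theta> ^ q * \<theta> ^ q\<^sup>2"

lemma field_norm_one [simp]: "field_norm 1 = 1"
  by (simp add: field_norm_def)

lemma field_norm_minus_one [simp]: "field_norm (-1) = -1"
  by (simp add: field_norm_def frobenius_minus frobenius2_minus)

lemma type_S_theta:
  assumes "P \<in> S_theta q (\<theta> :: 'a)"
  shows "typeII_pt q P \<longleftrightarrow> field_norm \<theta> = -1"
    and "typeIII_pt q P \<longleftrightarrow> field_norm \<theta> \<noteq> -1"
proof -
  obtain x where x: "x \<noteq> 0" "P = proj (x * \<theta>, x ^ q, 0)"
    using assms by (auto simp: S_theta_def)
  have "frob3 q (x * \<theta>, x ^ q, 0) = (0, x ^ q * \<theta> ^ q, x ^ q\<^sup>2)"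
    "frob3 q (0, x ^ q * \<theta> ^ q, x ^ q\<^sup>2) = (x, 0, x ^ q\<^sup>2 * \<theta> ^ q\<^sup>2)"
    by (simp_all add: frob3_def frobenius_simps)
  moreover have "det3 (x * \<theta>, x ^ q, 0) (0, x ^ q * \<theta> ^ q, x ^ q\<^sup>2) (x, 0, x ^ q\<^sup>2 * \<theta> ^ q\<^sup>2)
      = x * x ^ q * x ^ q\<^sup>2 * (field_norm \<theta> + 1)"
    by (simp add: det3_def dot3_def cross3_def field_norm_def algebra_simps)
  moreover have "x * x ^ q * x ^ q\<^sup>2 \<noteq> 0" using x(1) by simp
  ultimately show "typeII_pt q P \<longleftrightarrow> field_norm \<theta> = -1"
    and "typeIII_pt q P \<longleftrightarrow> field_norm \<theta> \<noteq> -1"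
    using proj_type_iff_det[of "(x * \<theta>, x ^ q, 0)"] x
    by (simp_all add: cross3_def eq_neg_iff_add_eq_0)
qed

lemma type_TS_theta:
  assumes "l \<in> TS_theta q (\<theta> :: 'a)"
  shows "typeII_ln q l \<longleftrightarrow> field_norm \<theta> = 1"
    and "typeIII_ln q l \<longleftrightarrow> field_norm \<theta> \<noteq> 1"
proof -
  obtain x where x: "x \<noteq> 0" "l = proj (- (x ^ q), x * \<theta>, 0)"
    using assms q_ge_2 by (auto simp: TS_theta_def S_theta_def join_Tpt_proj)
  have "frob3 q (- (x ^ q), x * \<theta>, 0) = (0, - (x ^ q\<^sup>2), x ^ q * \<theta> ^ q)"
    "frob3 q (0, - (x ^ q\<^sup>2), x ^ q * \<theta> ^ q) = (x ^ q\<^sup>2 * \<theta> ^ q\<^sup>2, 0, - x)"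
    by (simp_all add: frob3_def frobenius_simps)
  moreover have "det3 (- (x ^ q), x * \<theta>, 0) (0, - (x ^ q\<^sup>2), x ^ q * \<theta> ^ q)
      (x ^ q\<^sup>2 * \<theta> ^ q\<^sup>2, 0, - x) = x * x ^ q * x ^ q\<^sup>2 * (field_norm \<theta> - 1)"
    by (simp add: det3_def dot3_def cross3_def field_norm_def algebra_simps)
  moreover have "x * x ^ q * x ^ q\<^sup>2 \<noteq> 0" using x(1) by simp
  ultimately show "typeII_ln q l \<longleftrightarrow> field_norm \<theta> = 1"
    and "typeIII_ln q l \<longleftrightarrow> field_norm \<theta> \<noteq> 1"
    using proj_type_iff_det[of "(- (x ^ q), x * \<theta>, 0)"] x
    by (simp_all add: typeII_ln_eq_typeII_pt typeIII_ln_eq_typeIII_pt cross3_def)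
qed

end

theorem corollary5p2:
  fixes q :: nat
  assumes "\<exists>p k. prime p \<and> 0 < k \<and> q = p ^ k"
    and "card (UNIV :: 'a::{field,finite} set) = q ^ 3"
  shows "(even q \<longrightarrow>
            (\<forall>P\<in>S_theta q (1::'a). typeII_pt q P) \<and>
            (\<forall>l\<in>TS_theta q (1::'a). typeII_ln q l) \<and>
            S_theta q (1::'a) = Pr (P2q q) \<and> S_theta q (1::'a) = Sp q (P2q q))
       \<and> (odd q \<longrightarrow>
            ((\<forall>P\<in>S_theta q (1::'a). typeIII_pt q P) \<and>
             (\<forall>l\<in>TS_theta q (1::'a). typeII_ln q l) \<and>
             S_theta q (1::'a) = mu_line q ` sub_lines q (Pi_theta q (-1::'a)) \<and>
             S_theta q (1::'a) = Pr (P2q q) \<and>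
             S_theta q (1::'a) = Pr (Pi_theta q (-1::'a)))
          \<and> ((\<forall>P\<in>S_theta q (-1::'a). typeII_pt q P) \<and>
             (\<forall>l\<in>TS_theta q (-1::'a). typeIII_ln q l) \<and>
             S_theta q (-1::'a) = SpL (mu_pt q ` Pi_theta q (-1::'a)) \<and>
             S_theta q (-1::'a) = Sp q (P2q q) \<and>
             S_theta q (-1::'a) = Sp q (Pi_theta q (-1::'a))))"
proof -
  note subplanes = P2q_eq_subplane[OF assms] Pi_theta_minus_one_eq_subplane[OF assms]
  note types = type_S_theta[OF assms] type_TS_theta[OF assms]
    field_norm_one[OF assms] field_norm_minus_one[OF assms]
  note images = Pr_subplane[OF assms] Sp_subplane[OF assms]
    mu_line_sub_lines_subplane[OF assms] SpL_mu_pt_subplane[OF assms]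
  show ?thesis
  proof (cases "even q")
    case True
    then have minus_one: "(-1 :: 'a) = 1" using minus_one_eq_one_iff_even[OF assms] by simp
    show ?thesis using True types images unfolding minus_one by (auto simp: subplanes)
  next
    case False
    then have "(-1 :: 'a) \<noteq> 1" using minus_one_eq_one_iff_even[OF assms] by simp
    with False show ?thesis using types images by (auto simp: subplanes)
  qed
qed

end
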